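(* Suppose every IDR of the system $\mathcal{I}(E,\mathcal{F}(E))$ is of Restricted Case I form, and let $E'\subsetneq E$. Then for any two distinct entities $e_i\neq e_j$ in $E$, exactly one of the following holds or more than one holds: (a) $PS(e_i\mid E')\subseteq PS(e_j\mid E')$, (b) $PS(e_j\mid E')\subseteq PS(e_i\mid E')$, (c) $PS(e_i\mid E')\cap PS(e_j\mid E')=\emptyset$; that is, at least one of (a), (b), (c) holds.
   Context: A system $\mathcal{I}(E,\mathcal{F}(E))$ consists of a finite set $E$ of entities, $n=|E|$, and a set $\mathcal{F}(E)$ of interdependency relations (IDRs). Each entity $e$ has at most one IDR, of the form $e\leftarrow \sum_{i=1}^{m}\prod_{x\in s_i}x$ (a disjunction of conjunctions), where each minterm $s_i$ is a nonempty subset of $E$; it means $e$ is operational only if for at least one minterm all entities of that minterm are operational. Entities without an IDR can only fail initially. Failure dynamics: given an initially failing set $E'\subseteq E$ and a set $H\subseteq E$ of hardened entities (hardened entities never fail), put $F_0=E'\setminus H$ and $F_{t+1}=F_t\cup\{e\in E\setminus H: e \text{ has an IDR and every minterm of it contains an element of } F_t\}$; the final failed set is $F(E',H):=F_{n-1}$. $\mathrm{KillSet}(E'):=F(E',\emptyset)$. Protection set: $PS(H\mid E'):=\mathrm{KillSet}(E')\setminus F(E',H)$, and $PS(e\mid E'):=PS(\{e\}\mid E')$. Restricted Case I: every IDR consists of a single minterm of size one, i.e. has the form $e_i\leftarrow e_j$ with $e_j\in E$. *)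

theory Defs
  imports Main
begin

text \<open>The IDR of an entity e is
  idr e: None means e has no IDR; Some M means e <- sum over minterms s in M of
  prod over x in s of x (M a set of minterms, each a subset of E).\<close>

type_synonym 'a idr_sys = "'a \<Rightarrow> 'a set set option"

definition wf_system :: "'a set \<Rightarrow> 'a idr_sys \<Rightarrow> bool" where
  "wf_system E idr \<longleftrightarrow> finite E \<and>
     (\<forall>e \<in> E. \<forall>M. idr e = Some M \<longrightarrow>
        finite M \<and> M \<noteq> {} \<and> (\<forall>s \<in> M. s \<noteq> {} \<and> finite s \<and> s \<subseteq> E))"

definition restricted_case_I :: "'a set \<Rightarrow> 'a idr_sys \<Rightarrow> bool" where
  "restricted_case_I E idr \<longleftrightarrow>
     (\<forall>e \<in> E. \<forall>M. idr e = Some M \<longrightarrow> (\<exists>x \<in> E. M = {{x}}))"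

definition fail_step :: "'a set \<Rightarrow> 'a idr_sys \<Rightarrow> 'a set \<Rightarrow> 'a set \<Rightarrow> 'a set" where
  "fail_step E idr H Ft = Ft \<union> {e \<in> E - H. \<exists>M. idr e = Some M \<and> (\<forall>s \<in> M. s \<inter> Ft \<noteq> {})}"

fun fail_iter :: "'a set \<Rightarrow> 'a idr_sys \<Rightarrow> 'a set \<Rightarrow> 'a set \<Rightarrow> nat \<Rightarrow> 'a set" where
  "fail_iter E idr E' H 0 = E' - H"
| "fail_iter E idr E' H (Suc t) = fail_step E idr H (fail_iter E idr E' H t)"

definition final_failed :: "'a set \<Rightarrow> 'a idr_sys \<Rightarrow> 'a set \<Rightarrow> 'a set \<Rightarrow> 'a set" where
  "final_failed E idr E' H = fail_iter E idr E' H (card E - 1)"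

definition KillSet :: "'a set \<Rightarrow> 'a idr_sys \<Rightarrow> 'a set \<Rightarrow> 'a set" where
  "KillSet E idr E' = final_failed E idr E' {}"

definition PS :: "'a set \<Rightarrow> 'a idr_sys \<Rightarrow> 'a set \<Rightarrow> 'a set \<Rightarrow> 'a set" where
  "PS E idr H E' = KillSet E idr E' - final_failed E idr E' H"

end

theory Submission
  imports Defs
begin

text \<open>In Restricted Case I every entity with an IDR has a unique parent, so an entity
  fails exactly when its chain of ancestors reaches the initially failing set E' through
  entities that all have an IDR; with hardening, additionally no entity of the chain may be
  hardened. Chains are deterministic, so every failing entity e has a shortest such chain,
  its route, and e is protected by H iff its route meets H. A route starting at an entity
  on the route of e is a suffix of the route of e, so routes form a forest rooted in E':
  two entities on one route are comparable, and then the descendants of the lower one are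
  descendants of the upper one.\<close>

definition parent :: "'a idr_sys \<Rightarrow> 'a \<Rightarrow> 'a" where
  "parent idr e = (THE x. idr e = Some {{x}})"

definition failure_path :: "'a set \<Rightarrow> 'a idr_sys \<Rightarrow> 'a set \<Rightarrow> 'a set \<Rightarrow> 'a \<Rightarrow> nat \<Rightarrow> bool" where
  "failure_path E idr E' H e k \<longleftrightarrow>
     (parent idr ^^ k) e \<in> E' \<and> (\<forall>i\<le>k. (parent idr ^^ i) e \<notin> H) \<and>
     (\<forall>i<k. (parent idr ^^ i) e \<in> E \<and> idr ((parent idr ^^ i) e) \<noteq> None)"

definition hit_time :: "'a set \<Rightarrow> 'a idr_sys \<Rightarrow> 'a set \<Rightarrow> 'a \<Rightarrow> nat" where
  "hit_time E idr E' e = (LEAST k. failure_path E idr E' {} e k)"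

definition route :: "'a set \<Rightarrow> 'a idr_sys \<Rightarrow> 'a set \<Rightarrow> 'a \<Rightarrow> 'a set" where
  "route E idr E' e = (\<lambda>i. (parent idr ^^ i) e) ` {..hit_time E idr E' e}"

lemma funpow_add_apply: "(f ^^ (m + n)) x = (f ^^ m) ((f ^^ n) x)"
  by (simp add: funpow_add)

lemma parent_eq: "idr e = Some {{x}} \<Longrightarrow> parent idr e = x"
  unfolding parent_def by auto

lemma fail_step_case_I:
  assumes "restricted_case_I E idr"
  shows "fail_step E idr H F = F \<union> {e \<in> E - H. idr e \<noteq> None \<and> parent idr e \<in> F}"
proof -
  have "(\<exists>M. idr e = Some M \<and> (\<forall>s \<in> M. s \<inter> F \<noteq> {})) \<longleftrightarrow> idr e \<noteq> None \<and> parent idr e \<in> F"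
    if "e \<in> E" for e
  proof (cases "idr e")
    case (Some M)
    then obtain x where "M = {{x}}"
      using assms \<open>e \<in> E\<close> unfolding restricted_case_I_def by blast
    with Some show ?thesis using parent_eq[of idr e x] by auto
  qed simp
  then show ?thesis unfolding fail_step_def by blast
qed

lemma failure_path_0: "failure_path E idr E' H e 0 \<longleftrightarrow> e \<in> E' \<and> e \<notin> H"
  unfolding failure_path_def by auto

lemma failure_path_Suc:
  "failure_path E idr E' H e (Suc k) \<longleftrightarrow>
     e \<in> E \<and> e \<notin> H \<and> idr e \<noteq> None \<and> failure_path E idr E' H (parent idr e) k"
proof -
  have "(\<forall>i\<le>Suc k. P i) \<longleftrightarrow> P 0 \<and> (\<forall>i\<le>k. P (Suc i))"
    and "(\<forall>i<Suc k. P i) \<longleftrightarrow> P 0 \<and> (\<forall>i<k. P (Suc i))" for P :: "nat \<Rightarrow> bool"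
    by (simp_all add: less_Suc_eq_le[symmetric] All_less_Suc2 del: less_Suc_eq_le)
  then show ?thesis unfolding failure_path_def by (auto simp: funpow_swap1)
qed

lemma failure_path_shift:
  "failure_path E idr E' H e (m + i) \<Longrightarrow> failure_path E idr E' H ((parent idr ^^ i) e) m"
  unfolding failure_path_def by (auto simp: funpow_add_apply[symmetric])

lemma failure_path_prefix:
  "failure_path E idr E' H e k \<Longrightarrow> m \<le> k \<Longrightarrow> (parent idr ^^ m) e \<in> E' \<Longrightarrow>
     failure_path E idr E' H e m"
  unfolding failure_path_def by auto

lemma failure_path_avoiding_iff:
  "failure_path E idr E' H e k \<longleftrightarrow>
     failure_path E idr E' {} e k \<and> (\<lambda>i. (parent idr ^^ i) e) ` {..k} \<inter> H = {}"
  unfolding failure_path_def by auto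

lemma mem_fail_iter_iff:
  assumes "restricted_case_I E idr" "E' \<subseteq> E"
  shows "e \<in> fail_iter E idr E' H t \<longleftrightarrow> (\<exists>k\<le>t. failure_path E idr E' H e k)"
proof (induction t arbitrary: e)
  case 0
  then show ?case by (simp add: failure_path_0)
next
  case (Suc t)
  have "e \<in> fail_iter E idr E' H (Suc t) \<longleftrightarrow>
      (\<exists>k\<le>t. failure_path E idr E' H e k) \<or>
      (e \<in> E \<and> e \<notin> H \<and> idr e \<noteq> None \<and> (\<exists>k\<le>t. failure_path E idr E' H (parent idr e) k))"
    using Suc.IH by (auto simp: fail_step_case_I[OF assms(1)])
  also have "\<dots> \<longleftrightarrow>
      (\<exists>k\<le>t. failure_path E idr E' H e k) \<or> (\<exists>k\<le>t. failure_path E idr E' H e (Suc k))"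
    by (auto simp: failure_path_Suc)
  also have "\<dots> \<longleftrightarrow> (\<exists>k\<le>Suc t. failure_path E idr E' H e k)"
    by (metis Suc_le_D Suc_le_mono le0 le_SucI not0_implies_Suc)
  finally show ?case .
qed

text \<open>Pigeonhole: on the shortest chain to E' no entity repeats, since a repetition would
  let the chain reach its endpoint, which lies in E', earlier.\<close>

lemma failure_path_first_hit_short:
  assumes "finite E" "E' \<subseteq> E" "failure_path E idr E' H e k"
    and first: "\<And>m. m < k \<Longrightarrow> (parent idr ^^ m) e \<notin> E'"
  shows "k < card E"
proof -
  let ?chain = "\<lambda>i. (parent idr ^^ i) e"
  have no_repeat: False if "i < j" "j \<le> k" "?chain i = ?chain j" for i j
  proof -
    have "?chain k = (parent idr ^^ (k - j)) (?chain j)"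
      using \<open>j \<le> k\<close> by (simp add: funpow_add_apply[symmetric])
    also have "\<dots> = (parent idr ^^ (k - j)) (?chain i)"
      using that by simp
    also have "\<dots> = ?chain (k - (j - i))"
      using that(1,2) by (simp add: funpow_add_apply[symmetric] Nat.diff_diff_right)
    finally have "?chain (k - (j - i)) \<in> E'"
      using assms(3) unfolding failure_path_def by simp
    moreover have "k - (j - i) < k"
      using that by simp
    ultimately show False
      using first by blast
  qed
  have "inj_on ?chain {..k}"
    by (rule inj_onI) (metis atMost_iff linorder_neqE_nat no_repeat)
  moreover have "?chain ` {..k} \<subseteq> E"
    using assms(2,3) unfolding failure_path_def by (auto simp: le_less)
  ultimately have "card {..k} \<le> card E"
    using card_inj_on_le assms(1) by blast
  then show ?thesis by simp
qed

lemma mem_final_failed_iff: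
  assumes "finite E" "restricted_case_I E idr" "E' \<subseteq> E"
  shows "e \<in> final_failed E idr E' H \<longleftrightarrow> (\<exists>k. failure_path E idr E' H e k)"
proof
  assume "\<exists>k. failure_path E idr E' H e k"
  then obtain k where k: "failure_path E idr E' H e k"
    and least: "\<And>m. failure_path E idr E' H e m \<Longrightarrow> k \<le> m"
    by (metis LeastI_ex Least_le)
  have "k < card E"
    using assms(1,3) k
    by (rule failure_path_first_hit_short) (meson failure_path_prefix k least less_le not_le)
  with k show "e \<in> final_failed E idr E' H"
    unfolding final_failed_def mem_fail_iter_iff[OF assms(2,3)] by (auto intro!: exI[of _ k])
qed (auto simp: final_failed_def mem_fail_iter_iff[OF assms(2,3)])

lemma mem_KillSet_iff:
  assumes "finite E" "restricted_case_I E idr" "E' \<subseteq> E"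
  shows "e \<in> KillSet E idr E' \<longleftrightarrow> (\<exists>k. failure_path E idr E' {} e k)"
  unfolding KillSet_def using mem_final_failed_iff[OF assms] .

lemma failure_path_hit_time:
  "failure_path E idr E' {} e k \<Longrightarrow> failure_path E idr E' {} e (hit_time E idr E' e)"
  unfolding hit_time_def by (rule LeastI)

lemma hit_time_le: "failure_path E idr E' {} e k \<Longrightarrow> hit_time E idr E' e \<le> k"
  unfolding hit_time_def by (rule Least_le)

lemma hit_time_funpow:
  assumes "failure_path E idr E' {} e k" "i \<le> hit_time E idr E' e"
  shows "hit_time E idr E' ((parent idr ^^ i) e) = hit_time E idr E' e - i"
proof -
  let ?K = "hit_time E idr E' e"
  have path: "failure_path E idr E' {} e ?K"
    using assms(1) by (rule failure_path_hit_time)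
  have "failure_path E idr E' {} ((parent idr ^^ i) e) (?K - i)"
    using failure_path_shift[of E idr E' "{}" e "?K - i" i] path assms(2) by simp
  moreover have "?K - i \<le> m" if "failure_path E idr E' {} ((parent idr ^^ i) e) m" for m
  proof (rule ccontr)
    assume "\<not> ?K - i \<le> m"
    then have earlier: "m + i \<le> ?K" "m + i \<noteq> ?K"
      using assms(2) by arith+
    have "(parent idr ^^ (m + i)) e \<in> E'"
      using that unfolding failure_path_def by (simp add: funpow_add_apply)
    with path earlier(1) have "failure_path E idr E' {} e (m + i)"
      by (rule failure_path_prefix)
    then have "?K \<le> m + i"
      by (rule hit_time_le)
    with earlier show False
      by simp
  qed
  ultimately show ?thesis
    unfolding hit_time_def[of _ _ _ "(parent idr ^^ i) e"] by (rule Least_equality)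
qed

lemma route_funpow:
  assumes "failure_path E idr E' {} e k" "i \<le> hit_time E idr E' e"
  shows "route E idr E' ((parent idr ^^ i) e) =
    (\<lambda>j. (parent idr ^^ j) e) ` {i..hit_time E idr E' e}"
proof -
  have "{i..hit_time E idr E' e} = (\<lambda>m. m + i) ` {..hit_time E idr E' e - i}"
    using assms(2) by (simp add: atMost_atLeast0)
  then show ?thesis
    unfolding route_def hit_time_funpow[OF assms] by (simp add: image_image funpow_add_apply)
qed

lemma funpow_mem_route:
  assumes "failure_path E idr E' {} e k" "i \<le> j" "j \<le> hit_time E idr E' e"
  shows "(parent idr ^^ j) e \<in> route E idr E' ((parent idr ^^ i) e)"
  unfolding route_funpow[OF assms(1) order_trans[OF assms(2,3)]] using assms(2,3) by simp

lemma route_subset: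
  assumes "failure_path E idr E' {} e k" "a \<in> route E idr E' e"
  shows "route E idr E' a \<subseteq> route E idr E' e"
proof -
  obtain i where i: "i \<le> hit_time E idr E' e" "a = (parent idr ^^ i) e"
    using assms(2) unfolding route_def by blast
  have "route E idr E' a = (\<lambda>j. (parent idr ^^ j) e) ` {i..hit_time E idr E' e}"
    unfolding i(2) using assms(1) i(1) by (rule route_funpow)
  also have "\<dots> \<subseteq> route E idr E' e"
    unfolding route_def by (rule image_mono) auto
  finally show ?thesis .
qed

lemma route_linear:
  assumes "failure_path E idr E' {} e k" "a \<in> route E idr E' e" "b \<in> route E idr E' e"
  shows "b \<in> route E idr E' a \<or> a \<in> route E idr E' b"
proof -
  obtain i j where "i \<le> hit_time E idr E' e" "a = (parent idr ^^ i) e"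
    and "j \<le> hit_time E idr E' e" "b = (parent idr ^^ j) e"
    using assms(2,3) unfolding route_def by blast
  then show ?thesis
    using funpow_mem_route[OF assms(1)] by (metis nle_le)
qed

lemma mem_PS_iff:
  assumes "finite E" "restricted_case_I E idr" "E' \<subseteq> E"
  shows "e \<in> PS E idr H E' \<longleftrightarrow>
    (\<exists>k. failure_path E idr E' {} e k) \<and> route E idr E' e \<inter> H \<noteq> {}"
proof (cases "\<exists>k. failure_path E idr E' {} e k")
  case True
  then obtain k where k: "failure_path E idr E' {} e k" ..
  let ?K = "hit_time E idr E' e"
  have "(\<exists>k. failure_path E idr E' H e k) \<longleftrightarrow> route E idr E' e \<inter> H = {}"
  proof
    assume "\<exists>k. failure_path E idr E' H e k"
    then obtain k' where "failure_path E idr E' H e k'" ..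
    then have k': "failure_path E idr E' {} e k'"
      and avoids: "(\<lambda>i. (parent idr ^^ i) e) ` {..k'} \<inter> H = {}"
      using failure_path_avoiding_iff[of E idr E' H e k'] by simp_all
    have "route E idr E' e \<subseteq> (\<lambda>i. (parent idr ^^ i) e) ` {..k'}"
      unfolding route_def using hit_time_le[OF k'] by (intro image_mono) simp
    with avoids show "route E idr E' e \<inter> H = {}" by blast
  next
    assume "route E idr E' e \<inter> H = {}"
    with failure_path_hit_time[OF k] have "failure_path E idr E' H e ?K"
      unfolding failure_path_avoiding_iff[of E idr E' H e ?K] route_def by simp
    then show "\<exists>k. failure_path E idr E' H e k" ..
  qed
  with True show ?thesis
    unfolding PS_def Diff_iff mem_KillSet_iff[OF assms] mem_final_failed_iff[OF assms] by simp
qed (simp add: PS_def mem_KillSet_iff[OF assms])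

lemma PS_mono:
  assumes "finite E" "restricted_case_I E idr" "E' \<subseteq> E" "b \<in> route E idr E' a"
  shows "PS E idr {a} E' \<subseteq> PS E idr {b} E'"
proof
  fix e assume "e \<in> PS E idr {a} E'"
  then obtain k where path: "failure_path E idr E' {} e k" and "a \<in> route E idr E' e"
    unfolding mem_PS_iff[OF assms(1-3)] by blast
  then have "route E idr E' a \<subseteq> route E idr E' e"
    by (rule route_subset)
  with assms(4) path show "e \<in> PS E idr {b} E'"
    unfolding mem_PS_iff[OF assms(1-3)] by blast
qed

theorem theorem7:
  fixes E :: "'a set" and idr :: "'a idr_sys" and E' :: "'a set" and ei ej :: 'a
  assumes "wf_system E idr"
    and "restricted_case_I E idr"
    and "E' \<subset> E"
    and "ei \<in> E" and "ej \<in> E" and "ei \<noteq> ej"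
  shows "PS E idr {ei} E' \<subseteq> PS E idr {ej} E'
       \<or> PS E idr {ej} E' \<subseteq> PS E idr {ei} E'
       \<or> PS E idr {ei} E' \<inter> PS E idr {ej} E' = {}"
proof -
  \<comment> \<open>The dichotomy holds for every pair of entities and every E' \<subseteq> E.\<close>
  have setting: "finite E" "restricted_case_I E idr" "E' \<subseteq> E"
    using assms(1-3) by (auto simp: wf_system_def)
  have "PS E idr {ei} E' \<subseteq> PS E idr {ej} E' \<or> PS E idr {ej} E' \<subseteq> PS E idr {ei} E'"
    if in_both: "e \<in> PS E idr {ei} E'" "e \<in> PS E idr {ej} E'" for e
  proof -
    obtain k where "failure_path E idr E' {} e k"
      and "ei \<in> route E idr E' e" "ej \<in> route E idr E' e"
      using in_both unfolding mem_PS_iff[OF setting] by blast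
    then have "ej \<in> route E idr E' ei \<or> ei \<in> route E idr E' ej"
      by (rule route_linear)
    then show ?thesis
      by (elim disjE) (simp_all add: PS_mono[OF setting])
  qed
  then show ?thesis by blast
qed

end
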